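(* Let $G=(V,E)$ be a finite chordal graph. Then for every integer $r\ge 1$, \[ \sum_{\substack{I\in\mathscr{C}(G)\\ |I|\le 2r}} (-1)^{|I|-1} \;\le\; c(G), \] with equality whenever $r\ge |V|/2$.
   Context: A graph is chordal if it contains no cycle of length four or more as an induced subgraph. $\mathscr{C}(G)$ denotes the clique complex of $G$: the set of all non-empty subsets $I\subseteq V$ whose elements are pairwise adjacent in $G$. $c(G)$ denotes the number of connected components of $G$. *)

theory Defs
  imports Main
begin

definition simple_graph :: "'a set \<Rightarrow> ('a \<Rightarrow> 'a \<Rightarrow> bool) \<Rightarrow> bool" where
  "simple_graph V E \<longleftrightarrow> finite V \<and> (\<forall>x y. E x y \<longrightarrow> x \<in> V \<and> y \<in> V)
     \<and> (\<forall>x y. E x y \<longrightarrow> E y x) \<and> (\<forall>x. \<not> E x x)"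

definition induced_cycle :: "'a set \<Rightarrow> ('a \<Rightarrow> 'a \<Rightarrow> bool) \<Rightarrow> 'a list \<Rightarrow> bool" where
  "induced_cycle V E vs \<longleftrightarrow> distinct vs \<and> set vs \<subseteq> V \<and>
     (\<forall>i < length vs. \<forall>j < length vs.
        E (vs ! i) (vs ! j) \<longleftrightarrow> (j = Suc i mod length vs \<or> i = Suc j mod length vs))"

definition chordal :: "'a set \<Rightarrow> ('a \<Rightarrow> 'a \<Rightarrow> bool) \<Rightarrow> bool" where
  "chordal V E \<longleftrightarrow> \<not> (\<exists>vs. length vs \<ge> 4 \<and> induced_cycle V E vs)"

definition clique_complex :: "'a set \<Rightarrow> ('a \<Rightarrow> 'a \<Rightarrow> bool) \<Rightarrow> 'a set set" where
  "clique_complex V E = {I. I \<noteq> {} \<and> I \<subseteq> V \<and> (\<forall>x\<in>I. \<forall>y\<in>I. x \<noteq> y \<longrightarrow> E x y)}"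

definition num_components :: "'a set \<Rightarrow> ('a \<Rightarrow> 'a \<Rightarrow> bool) \<Rightarrow> nat" where
  "num_components V E =
     card (V // {(x, y). x \<in> V \<and> y \<in> V \<and> (\<lambda>a b. E a b \<and> a \<in> V \<and> b \<in> V)\<^sup>*\<^sup>* x y})"

end

theory Submission
  imports Defs
begin

text \<open>
  Write c(G) for the number of components and, for n \<ge> 1, write S_n(G) for the sum of
  (-1)^(|I|-1) over the non-empty cliques I with fewer than n vertices.

  The proof is by deleting a vertex v with neighbourhood N.  Cliques through v are v added
  to a clique of N, whence S_(n+1)(G) = S_(n+1)(G - v) + 1 - S_n(N).  For chordal G the
  components satisfy the same recurrence c(G) = c(G - v) + 1 - c(N): two neighbours of v
  connected in G - v are connected inside N, since a shortest walk between them outside N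
  closes up through v to an induced cycle of length at least four.  Hence the defect
  D_n(G) = c(G) - S_n(G) obeys D_(n+1)(G) = D_(n+1)(G - v) - D_n(N), and induction on |V|
  gives the alternating sign (-1)^n D_n(G) \<le> 0, with D_n(G) = 0 when |V| < n.
\<close>

definition reach :: "'a set \<Rightarrow> ('a \<Rightarrow> 'a \<Rightarrow> bool) \<Rightarrow> 'a \<Rightarrow> 'a \<Rightarrow> bool" where
  "reach W E = (\<lambda>a b. E a b \<and> a \<in> W \<and> b \<in> W)\<^sup>*\<^sup>*"

lemma reach_refl [simp]: "reach W E x x"
  unfolding reach_def by simp

lemma reach_trans: "reach W E x y \<Longrightarrow> reach W E y z \<Longrightarrow> reach W E x z"
  unfolding reach_def by (rule rtranclp_trans)

lemma reach_edge: "E x y \<Longrightarrow> x \<in> W \<Longrightarrow> y \<in> W \<Longrightarrow> reach W E x y"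
  unfolding reach_def by (rule r_into_rtranclp) simp

lemma reach_sym:
  assumes sym: "symp E" and "reach W E x y"
  shows "reach W E y x"
  using assms(2) unfolding reach_def
proof (induction rule: rtranclp_induct)
  case (step y z)
  then show ?case using sympD[OF sym] by (auto intro: converse_rtranclp_into_rtranclp)
qed simp

lemma reach_mono: "reach W E x y \<Longrightarrow> W \<subseteq> U \<Longrightarrow> reach U E x y"
  unfolding reach_def by (erule rtranclp_mono[THEN predicate2D, rotated]) auto

definition walk :: "'a set \<Rightarrow> ('a \<Rightarrow> 'a \<Rightarrow> bool) \<Rightarrow> 'a list \<Rightarrow> bool" where
  "walk W E xs \<longleftrightarrow> xs \<noteq> [] \<and> set xs \<subseteq> W \<and> successively E xs"

lemma reach_imp_walk:
  assumes "reach W E x y" "x \<in> W"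
  shows "\<exists>xs. walk W E xs \<and> hd xs = x \<and> last xs = y"
  using assms(1) unfolding reach_def
proof (induction rule: rtranclp_induct)
  case base
  then show ?case using assms(2) by (intro exI[of _ "[x]"]) (simp add: walk_def)
next
  case (step y z)
  then obtain xs where "walk W E xs" "hd xs = x" "last xs = y" by blast
  then show ?case using step(2)
    by (intro exI[of _ "xs @ [z]"]) (auto simp: walk_def successively_append_iff)
qed

lemma walk_take: "walk W E xs \<Longrightarrow> walk W E (take (Suc k) xs)"
  unfolding walk_def
  using successively_append_iff[of E "take (Suc k) xs" "drop (Suc k) xs"]
  by (auto dest: in_set_takeD)

lemma walk_drop: "walk W E xs \<Longrightarrow> k < length xs \<Longrightarrow> walk W E (drop k xs)"
  unfolding walk_def
  using successively_append_iff[of E "take k xs" "drop k xs"]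
  by (auto dest: in_set_dropD)

lemma walk_append:
  "walk W E xs \<Longrightarrow> walk W E ys \<Longrightarrow> E (last xs) (hd ys) \<Longrightarrow> walk W E (xs @ ys)"
  unfolding walk_def by (auto simp: successively_append_iff)

lemma walk_edge: "walk W E xs \<Longrightarrow> Suc k < length xs \<Longrightarrow> E (xs ! k) (xs ! Suc k)"
  unfolding walk_def by (simp add: successively_nth)

definition shortest_walk :: "'a set \<Rightarrow> ('a \<Rightarrow> 'a \<Rightarrow> bool) \<Rightarrow> 'a list \<Rightarrow> bool" where
  "shortest_walk W E xs \<longleftrightarrow> walk W E xs \<and>
     (\<forall>ys. walk W E ys \<and> hd ys = hd xs \<and> last ys = last xs \<longrightarrow> length xs \<le> length ys)"

text \<open>A shortest walk repeats no vertex: a repetition could be cut out.\<close>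
lemma shortest_walk_distinct:
  assumes sw: "shortest_walk W E xs"
  shows "distinct xs"
proof (rule ccontr)
  assume "\<not> distinct xs"
  then obtain k l where kl: "k < l" "l < length xs" and eq: "xs ! k = xs ! l"
    by (metis distinct_conv_nth linorder_neqE_nat)
  have w: "walk W E xs" using sw unfolding shortest_walk_def by simp
  let ?ys = "take (Suc k) xs @ drop (Suc l) xs"
  have last_take: "last (take (Suc k) xs) = xs ! l"
    using kl eq by (subst last_conv_nth) auto
  have "walk W E ?ys \<and> last ?ys = last xs"
  proof (cases "Suc l < length xs")
    case True
    have "hd (drop (Suc l) xs) = xs ! Suc l" using True by (simp add: hd_drop_conv_nth)
    then show ?thesis
      using walk_append[OF walk_take[OF w] walk_drop[OF w True]] walk_edge[OF w True] last_take True
      by simp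
  next
    case False
    then have "l = length xs - 1" using kl by simp
    moreover have "xs \<noteq> []" using kl by auto
    ultimately show ?thesis using walk_take[OF w] last_take False
      by (simp add: last_conv_nth)
  qed
  moreover have "hd ?ys = hd xs" using kl by (cases xs) auto
  moreover have "length ?ys < length xs" using kl by simp
  ultimately show False using sw unfolding shortest_walk_def by fastforce
qed

text \<open>A shortest walk has no chord: a chord would give a shortcut.\<close>
lemma shortest_walk_chordless:
  assumes sw: "shortest_walk W E xs" and kl: "Suc k < l" "l < length xs"
  shows "\<not> E (xs ! k) (xs ! l)"
proof
  assume e: "E (xs ! k) (xs ! l)"
  have w: "walk W E xs" using sw unfolding shortest_walk_def by simp
  let ?ys = "take (Suc k) xs @ drop l xs"
  have "last (take (Suc k) xs) = xs ! k" using kl by (subst last_conv_nth) auto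
  moreover have "hd (drop l xs) = xs ! l" using kl by (simp add: hd_drop_conv_nth)
  ultimately have "walk W E ?ys"
    using walk_append[OF walk_take[OF w] walk_drop[OF w kl(2)]] e by simp
  moreover have "hd ?ys = hd xs" "last ?ys = last xs" using kl by (cases xs; simp)+
  moreover have "length ?ys < length xs" using kl by simp
  ultimately show False using sw unfolding shortest_walk_def by fastforce
qed

definition induced_path :: "('a \<Rightarrow> 'a \<Rightarrow> bool) \<Rightarrow> 'a list \<Rightarrow> bool" where
  "induced_path E xs \<longleftrightarrow> distinct xs \<and>
     (\<forall>k < length xs. \<forall>l < length xs. E (xs ! k) (xs ! l) \<longleftrightarrow> (l = Suc k \<or> k = Suc l))"

lemma shortest_walk_induced_path:
  assumes sym: "symp E" and irr: "irreflp E"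
    and sw: "shortest_walk W E xs"
  shows "induced_path E xs"
  unfolding induced_path_def
proof (intro conjI allI impI)
  show "distinct xs" using sw by (rule shortest_walk_distinct)
  fix k l assume k: "k < length xs" and l: "l < length xs"
  have w: "walk W E xs" using sw unfolding shortest_walk_def by simp
  show "E (xs ! k) (xs ! l) \<longleftrightarrow> (l = Suc k \<or> k = Suc l)"
  proof
    assume e: "E (xs ! k) (xs ! l)"
    show "l = Suc k \<or> k = Suc l"
    proof (rule ccontr)
      assume "\<not> (l = Suc k \<or> k = Suc l)"
      then consider "k = l" | "Suc k < l" | "Suc l < k" by linarith
      then show False
      proof cases
        case 1 then show False using e irreflpD[OF irr] by simp
      next
        case 2 then show False using e shortest_walk_chordless[OF sw _ l] by simp
      next
        case 3 then show False using sympD[OF sym e] shortest_walk_chordless[OF sw _ k] by simp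
      qed
    qed
  qed (use walk_edge[OF w] sympD[OF sym] k l in auto)
qed

lemma induced_cycle_close_path:
  assumes sym: "symp E" and irr: "irreflp E"
    and path: "induced_path E xs" and len: "length xs \<ge> 3"
    and vV: "v \<in> V" and xsV: "set xs \<subseteq> V" and vxs: "v \<notin> set xs"
    and apex: "\<And>k. k < length xs \<Longrightarrow> E v (xs ! k) \<longleftrightarrow> (k = 0 \<or> k = length xs - 1)"
  shows "induced_cycle V E (v # xs)"
  unfolding induced_cycle_def
proof (intro conjI allI impI)
  show "distinct (v # xs)" using vxs path unfolding induced_path_def by simp
  show "set (v # xs) \<subseteq> V" using vV xsV by simp
  fix i j assume i: "i < length (v # xs)" and j: "j < length (v # xs)"
  define n where "n = length (v # xs)"
  have n4: "n \<ge> 4" using len n_def by simp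
  have exx: "E (xs ! k) (xs ! l) \<longleftrightarrow> (l = Suc k \<or> k = Suc l)"
    if "k < length xs" "l < length xs" for k l
    using path that unfolding induced_path_def by blast
  show "E ((v # xs) ! i) ((v # xs) ! j) \<longleftrightarrow> (j = Suc i mod n \<or> i = Suc j mod n)"
  proof (cases i)
    case 0
    show ?thesis
    proof (cases j)
      case 0 then show ?thesis using \<open>i = 0\<close> irreflpD[OF irr] n4 by simp
    next
      case (Suc l)
      have "(j = Suc i mod n \<or> i = Suc j mod n) \<longleftrightarrow> (l = 0 \<or> l = length xs - 1)"
        using \<open>i = 0\<close> Suc n4 n_def j by (auto simp: mod_Suc)
      then show ?thesis using apex[of l] \<open>i = 0\<close> Suc j by simp
    qed
  next
    case (Suc k)
    show ?thesis
    proof (cases j)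
      case 0
      have "(j = Suc i mod n \<or> i = Suc j mod n) \<longleftrightarrow> (k = 0 \<or> k = length xs - 1)"
        using \<open>j = 0\<close> Suc n4 n_def i by (auto simp: mod_Suc)
      then show ?thesis using apex[of k] \<open>j = 0\<close> Suc i sympD[OF sym] by auto
    next
      case (Suc l)
      have "(j = Suc i mod n \<or> i = Suc j mod n) \<longleftrightarrow> (l = Suc k \<or> k = Suc l)"
        using \<open>i = Suc k\<close> Suc n4 n_def i j by (auto simp: mod_Suc)
      then show ?thesis using exx[of k l] \<open>i = Suc k\<close> Suc i j by simp
    qed
  qed
qed

lemma chordal_subset: "chordal V E \<Longrightarrow> W \<subseteq> V \<Longrightarrow> chordal W E"
  unfolding chordal_def induced_cycle_def by blast

definition neighbours :: "'a set \<Rightarrow> ('a \<Rightarrow> 'a \<Rightarrow> bool) \<Rightarrow> 'a \<Rightarrow> 'a set" where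
  "neighbours V E v = {u \<in> V. E v u}"

lemma neighbours_subset:
  "irreflp E \<Longrightarrow> neighbours V E v \<subseteq> V - {v}"
  unfolding neighbours_def by (auto dest: irreflpD)

definition separating_walk :: "'a set \<Rightarrow> ('a \<Rightarrow> 'a \<Rightarrow> bool) \<Rightarrow> 'a \<Rightarrow> 'a list \<Rightarrow> bool" where
  "separating_walk V E v xs \<longleftrightarrow> walk (V - {v}) E xs
     \<and> hd xs \<in> neighbours V E v \<and> last xs \<in> neighbours V E v
     \<and> \<not> reach (neighbours V E v) E (hd xs) (last xs)"

text \<open>Its end points are distinct and non-adjacent, so it has at least three vertices.\<close>
lemma separating_walk_length:
  assumes "separating_walk V E v xs"
  shows "length xs \<ge> 3"
proof (rule ccontr)
  assume short: "\<not> length xs \<ge> 3"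
  have w: "walk (V - {v}) E xs"
    and ends: "hd xs \<in> neighbours V E v" "last xs \<in> neighbours V E v"
    and apart: "\<not> reach (neighbours V E v) E (hd xs) (last xs)"
    using assms unfolding separating_walk_def by auto
  have "xs \<noteq> []" using w unfolding walk_def by simp
  then have hd_last: "hd xs = xs ! 0" "last xs = xs ! (length xs - 1)"
    by (simp_all add: hd_conv_nth last_conv_nth)
  have "0 < length xs" using \<open>xs \<noteq> []\<close> by simp
  then consider "length xs = 1" | "length xs = 2" using short by linarith
  then show False
  proof cases
    case 1 then show False using apart hd_last by simp
  next
    case 2
    then have "E (hd xs) (last xs)" using walk_edge[OF w, of 0] hd_last by simp
    then show False using apart reach_edge ends by metis
  qed
qed

text \<open>The inner vertices of a shortest separating walk are not neighbours of v:
  otherwise one of the two halves would be a shorter separating walk.\<close>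
lemma minimal_separating_walk_inner:
  assumes sep: "separating_walk V E v xs"
    and least: "\<And>ys. separating_walk V E v ys \<Longrightarrow> length xs \<le> length ys"
    and k: "0 < k" "k < length xs - 1"
  shows "xs ! k \<notin> neighbours V E v"
proof
  define N where "N = neighbours V E v"
  assume kN: "xs ! k \<in> neighbours V E v"
  have w: "walk (V - {v}) E xs" and ends: "hd xs \<in> N" "last xs \<in> N"
    and apart: "\<not> reach N E (hd xs) (last xs)"
    using sep unfolding separating_walk_def N_def by auto
  have "\<not> reach N E (hd xs) (xs ! k) \<or> \<not> reach N E (xs ! k) (last xs)"
    using apart reach_trans by metis
  then show False
  proof
    assume "\<not> reach N E (hd xs) (xs ! k)"
    moreover have "last (take (Suc k) xs) = xs ! k" using k by (subst last_conv_nth) auto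
    moreover have "hd (take (Suc k) xs) = hd xs" using k by (cases xs) auto
    ultimately have "separating_walk V E v (take (Suc k) xs)"
      unfolding separating_walk_def using walk_take[OF w] ends kN unfolding N_def by simp
    then show False using least[of "take (Suc k) xs"] k by simp
  next
    assume "\<not> reach N E (xs ! k) (last xs)"
    moreover have "hd (drop k xs) = xs ! k" using k by (simp add: hd_drop_conv_nth)
    moreover have "last (drop k xs) = last xs" using k by simp
    ultimately have "separating_walk V E v (drop k xs)"
      unfolding separating_walk_def using walk_drop[OF w] ends kN k unfolding N_def by simp
    then show False using least[of "drop k xs"] k by simp
  qed
qed

text \<open>A shortest separating walk would be an
  induced path which, closed up through v, is an induced cycle of length at least four.\<close>
lemma chordal_neighbours_connected:
  assumes sym: "symp E" and irr: "irreflp E" and ch: "chordal V E" and vV: "v \<in> V"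
    and a: "a \<in> neighbours V E v" and b: "b \<in> neighbours V E v"
    and r: "reach (V - {v}) E a b"
  shows "reach (neighbours V E v) E a b"
proof (rule ccontr)
  assume "\<not> reach (neighbours V E v) E a b"
  moreover obtain ys where "walk (V - {v}) E ys" "hd ys = a" "last ys = b"
    using reach_imp_walk[OF r] a neighbours_subset[OF irr] by blast
  ultimately have "separating_walk V E v ys" using a b unfolding separating_walk_def by simp
  then obtain xs where sep: "separating_walk V E v xs"
    and least: "\<And>ys. separating_walk V E v ys \<Longrightarrow> length xs \<le> length ys"
    using ex_has_least_nat[of "separating_walk V E v" ys length] by blast
  have w: "walk (V - {v}) E xs"
    and ends: "xs ! 0 \<in> neighbours V E v" "xs ! (length xs - 1) \<in> neighbours V E v"
    using sep unfolding separating_walk_def walk_def by (auto simp: hd_conv_nth last_conv_nth)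
  have "shortest_walk (V - {v}) E xs"
    using sep least unfolding shortest_walk_def separating_walk_def by auto
  then have path: "induced_path E xs" by (rule shortest_walk_induced_path[OF sym irr])
  have len: "length xs \<ge> 3" using sep by (rule separating_walk_length)
  have "induced_cycle V E (v # xs)"
  proof (rule induced_cycle_close_path[OF sym irr path len vV])
    show "set xs \<subseteq> V" "v \<notin> set xs" using w unfolding walk_def by auto
    show "E v (xs ! k) \<longleftrightarrow> (k = 0 \<or> k = length xs - 1)" if "k < length xs" for k
    proof -
      have "E v (xs ! k) \<longleftrightarrow> xs ! k \<in> neighbours V E v"
        using w nth_mem[OF that] unfolding walk_def neighbours_def by auto
      moreover have "k \<noteq> 0 \<Longrightarrow> k \<noteq> length xs - 1 \<Longrightarrow> xs ! k \<notin> neighbours V E v"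
        using minimal_separating_walk_inner[OF sep least] that by simp
      ultimately show ?thesis using ends by auto
    qed
  qed
  then show False using ch len unfolding chordal_def by force
qed

definition component :: "'a set \<Rightarrow> ('a \<Rightarrow> 'a \<Rightarrow> bool) \<Rightarrow> 'a \<Rightarrow> 'a set" where
  "component W E x = {y \<in> W. reach W E x y}"

lemma num_components_eq: "num_components W E = card (component W E ` W)"
proof -
  have "W // {(x, y). x \<in> W \<and> y \<in> W \<and> (\<lambda>a b. E a b \<and> a \<in> W \<and> b \<in> W)\<^sup>*\<^sup>* x y}
        = component W E ` W"
    unfolding quotient_def component_def reach_def by auto
  then show ?thesis unfolding num_components_def by simp
qed

lemma component_eq_iff:
  assumes sym: "symp E" and "x \<in> W" "y \<in> W"
  shows "component W E x = component W E y \<longleftrightarrow> reach W E x y"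
proof
  assume "component W E x = component W E y"
  then have "y \<in> component W E x" using assms(3) unfolding component_def by auto
  then show "reach W E x y" unfolding component_def by simp
next
  assume r: "reach W E x y"
  have r': "reach W E y x" using reach_sym[OF sym r] .
  show "component W E x = component W E y"
    unfolding component_def using reach_trans[OF r] reach_trans[OF r'] by blast
qed

lemma card_image_same_kernel:
  assumes "\<And>a b. a \<in> A \<Longrightarrow> b \<in> A \<Longrightarrow> f a = f b \<longleftrightarrow> g a = g b"
  shows "card (f ` A) = card (g ` A)"
proof -
  define h where "h y = f (inv_into A g y)" for y
  have hg: "h (g a) = f a" if "a \<in> A" for a
  proof -
    have "inv_into A g (g a) \<in> A" "g (inv_into A g (g a)) = g a"
      using that by (auto intro: inv_into_into f_inv_into_f)
    then show ?thesis unfolding h_def using assms that by blast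
  qed
  have "h ` (g ` A) = f ` A" using hg by (auto simp: image_image)
  moreover have "inj_on h (g ` A)" unfolding inj_on_def using hg assms by auto
  ultimately show ?thesis using card_image by metis
qed

lemma component_meeting_neighbours:
  assumes sym: "symp E" and irr: "irreflp E" and vV: "v \<in> V" and x: "x \<in> V - {v}"
    and meet: "component (V - {v}) E x \<in> component (V - {v}) E ` neighbours V E v"
  shows "component V E x = component V E v"
proof -
  obtain a where a: "a \<in> neighbours V E v" "component (V - {v}) E x = component (V - {v}) E a"
    using meet by blast
  have "a \<in> V - {v}" using a(1) neighbours_subset[OF irr] by blast
  then have "reach (V - {v}) E x a" using component_eq_iff[OF sym x] a(2) by blast
  then have "reach V E x a" by (rule reach_mono) auto
  moreover have "reach V E a v"
    using a(1) sympD[OF sym] vV unfolding neighbours_def by (intro reach_edge) auto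
  ultimately have "reach V E x v" by (rule reach_trans)
  then show ?thesis using component_eq_iff[OF sym _ vV] x by simp
qed

lemma component_missing_neighbours:
  assumes sym: "symp E" and irr: "irreflp E" and x: "x \<in> V - {v}"
    and miss: "component (V - {v}) E x \<notin> component (V - {v}) E ` neighbours V E v"
  shows "component V E x = component (V - {v}) E x"
proof -
  have avoid: "\<not> reach (V - {v}) E x a" if a: "a \<in> neighbours V E v" for a
  proof
    assume "reach (V - {v}) E x a"
    moreover have "a \<in> V - {v}" using a neighbours_subset[OF irr] by blast
    ultimately have "component (V - {v}) E x = component (V - {v}) E a"
      using component_eq_iff[OF sym x] by simp
    then show False using miss a by simp
  qed
  have "y \<noteq> v \<and> reach (V - {v}) E x y" if "reach V E x y" for y
    using that unfolding reach_def[of V]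
  proof (induction rule: rtranclp_induct)
    case (step y z)
    then have ry: "reach (V - {v}) E x y" and yz: "E y z" "y \<in> V" "z \<in> V" by auto
    have "z \<noteq> v"
    proof
      assume "z = v"
      then have "y \<in> neighbours V E v" using yz sympD[OF sym] unfolding neighbours_def by simp
      then show False using avoid ry by blast
    qed
    then have "reach (V - {v}) E y z" using yz step.IH by (intro reach_edge) auto
    then show ?case using \<open>z \<noteq> v\<close> reach_trans[OF ry] by blast
  next
    case base
    show ?case using x by simp
  qed
  moreover have "reach (V - {v}) E x y \<Longrightarrow> reach V E x y" for y
    by (rule reach_mono) auto
  ultimately show ?thesis unfolding component_def by auto
qed

text \<open>Deleting v: the components of G - v meeting the neighbourhood of v merge with v
  into a single component of G, all others survive unchanged.\<close>
lemma components_delete_vertex: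
  assumes fin: "finite V" and vV: "v \<in> V"
    and sym: "symp E" and irr: "irreflp E"
  shows "num_components V E + card (component (V - {v}) E ` neighbours V E v)
         = num_components (V - {v}) E + 1"
proof -
  define V' where "V' = V - {v}"
  define T where "T = component V' E ` neighbours V E v"
  define X where "X = {x \<in> V'. component V' E x \<notin> T}"
  have "component V E ` V = insert (component V E v) (component V' E ` X)"
  proof -
    have "V = insert v ((V' - X) \<union> X)" using vV unfolding X_def V'_def by blast
    then have "component V E ` V
        = insert (component V E v) (component V E ` (V' - X) \<union> component V E ` X)"
      by (simp only: image_insert image_Un)
    moreover have "component V E ` (V' - X) \<subseteq> {component V E v}"
      using component_meeting_neighbours[OF sym irr vV] unfolding X_def T_def V'_def by blast
    moreover have "component V E ` X = component V' E ` X"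
    proof (rule image_cong[OF refl])
      fix x assume "x \<in> X"
      then show "component V E x = component V' E x"
        unfolding V'_def using component_missing_neighbours[OF sym irr]
        by (simp add: X_def T_def V'_def)
    qed
    ultimately show ?thesis by (auto simp: subset_singleton_iff)
  qed
  moreover have "component V E v \<notin> component V' E ` X"
  proof -
    have "v \<in> component V E v" using vV by (simp add: component_def)
    moreover have "v \<notin> component V' E x" for x by (simp add: component_def V'_def)
    ultimately show ?thesis by blast
  qed
  moreover have finX: "finite X" using fin unfolding X_def V'_def by simp
  ultimately have "num_components V E = card (component V' E ` X) + 1"
    unfolding num_components_eq by simp
  moreover have "component V' E ` V' = component V' E ` X \<union> T"
    using neighbours_subset[OF irr] unfolding X_def T_def V'_def by blast
  moreover have "component V' E ` X \<inter> T = {}" unfolding X_def by blast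
  moreover have "finite T" using fin unfolding T_def neighbours_def by simp
  ultimately show ?thesis
    unfolding num_components_eq T_def V'_def using finX by (simp add: card_Un_disjoint)
qed

lemma chordal_neighbour_components:
  assumes sym: "symp E" and irr: "irreflp E"
    and ch: "chordal V E" and vV: "v \<in> V"
  shows "card (component (V - {v}) E ` neighbours V E v) = num_components (neighbours V E v) E"
  unfolding num_components_eq
proof (rule card_image_same_kernel)
  fix a b assume ab: "a \<in> neighbours V E v" "b \<in> neighbours V E v"
  have sub: "neighbours V E v \<subseteq> V - {v}" by (rule neighbours_subset[OF irr])
  have "component (V - {v}) E a = component (V - {v}) E b \<longleftrightarrow> reach (V - {v}) E a b"
    using ab sub by (intro component_eq_iff[OF sym]) auto
  also have "\<dots> \<longleftrightarrow> reach (neighbours V E v) E a b"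
    using chordal_neighbours_connected[OF sym irr ch vV ab] reach_mono[OF _ sub] by (rule iffI)
  also have "\<dots> \<longleftrightarrow> component (neighbours V E v) E a = component (neighbours V E v) E b"
    using ab by (intro component_eq_iff[OF sym, symmetric])
  finally show "component (V - {v}) E a = component (V - {v}) E b \<longleftrightarrow>
      component (neighbours V E v) E a = component (neighbours V E v) E b" .
qed

text \<open>Cliques including the empty one, so that deleting a vertex works uniformly.\<close>
definition is_clique :: "('a \<Rightarrow> 'a \<Rightarrow> bool) \<Rightarrow> 'a set \<Rightarrow> bool" where
  "is_clique E S \<longleftrightarrow> (\<forall>x\<in>S. \<forall>y\<in>S. x \<noteq> y \<longrightarrow> E x y)"

definition cliques_below :: "nat \<Rightarrow> 'a set \<Rightarrow> ('a \<Rightarrow> 'a \<Rightarrow> bool) \<Rightarrow> 'a set set" where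
  "cliques_below n W E = {S. S \<subseteq> W \<and> is_clique E S \<and> card S < n}"

text \<open>Alternating count of the cliques of W with fewer than n vertices, the empty clique
  included; this is 1 minus the truncated Euler characteristic of the clique complex.\<close>
definition clique_sum :: "nat \<Rightarrow> 'a set \<Rightarrow> ('a \<Rightarrow> 'a \<Rightarrow> bool) \<Rightarrow> int" where
  "clique_sum n W E = (\<Sum>S\<in>cliques_below n W E. (-1) ^ card S)"

lemma finite_cliques_below: "finite W \<Longrightarrow> finite (cliques_below n W E)"
  unfolding cliques_below_def by (rule finite_subset[of _ "Pow W"]) auto

lemma is_clique_insert:
  assumes sym: "symp E"
  shows "is_clique E (insert v S) \<longleftrightarrow> is_clique E S \<and> (\<forall>x\<in>S. x \<noteq> v \<longrightarrow> E v x)"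
  unfolding is_clique_def by (auto dest: sympD[OF sym])

lemma cliques_below_delete:
  assumes fin: "finite V" and vV: "v \<in> V"
    and sym: "symp E" and irr: "irreflp E"
  shows "cliques_below (Suc n) V E
         = cliques_below (Suc n) (V - {v}) E \<union> insert v ` cliques_below n (neighbours V E v) E"
proof (intro set_eqI iffI)
  fix S assume S: "S \<in> cliques_below (Suc n) V E"
  show "S \<in> cliques_below (Suc n) (V - {v}) E \<union> insert v ` cliques_below n (neighbours V E v) E"
  proof (cases "v \<in> S")
    case True
    have "finite S" using S fin unfolding cliques_below_def by (auto dest: finite_subset)
    moreover have "card S > 0" using \<open>finite S\<close> True by (auto simp: card_gt_0_iff)
    ultimately have "card (S - {v}) < n"
      using S True unfolding cliques_below_def by (auto simp: card_Diff_singleton)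
    moreover have "S - {v} \<subseteq> neighbours V E v" "is_clique E (S - {v})"
      using S True unfolding cliques_below_def neighbours_def is_clique_def by auto
    ultimately have "S - {v} \<in> cliques_below n (neighbours V E v) E"
      unfolding cliques_below_def by simp
    moreover have "S = insert v (S - {v})" using True by auto
    ultimately show ?thesis by blast
  next
    case False
    then show ?thesis using S unfolding cliques_below_def by auto
  qed
next
  fix S
  assume "S \<in> cliques_below (Suc n) (V - {v}) E \<union> insert v ` cliques_below n (neighbours V E v) E"
  then consider "S \<in> cliques_below (Suc n) (V - {v}) E"
    | T where "T \<in> cliques_below n (neighbours V E v) E" "S = insert v T" by blast
  then show "S \<in> cliques_below (Suc n) V E"
  proof cases
    case 1 then show ?thesis unfolding cliques_below_def by auto
  next
    case 2
    have TN: "T \<subseteq> neighbours V E v" using 2 unfolding cliques_below_def by simp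
    then have "finite T" "v \<notin> T"
      using fin irreflpD[OF irr] unfolding neighbours_def by (auto dest: finite_subset)
    then have "card S < Suc n" using 2 unfolding cliques_below_def by simp
    moreover have "is_clique E S" "S \<subseteq> V"
      using 2 TN vV unfolding cliques_below_def neighbours_def
      by (auto simp: is_clique_insert[OF sym])
    ultimately show ?thesis unfolding cliques_below_def by simp
  qed
qed

lemma clique_sum_delete:
  assumes fin: "finite V" and vV: "v \<in> V"
    and sym: "symp E" and irr: "irreflp E"
  shows "clique_sum (Suc n) V E
         = clique_sum (Suc n) (V - {v}) E - clique_sum n (neighbours V E v) E"
proof -
  define N where "N = neighbours V E v"
  define B where "B = cliques_below n N E"
  have finN: "finite N" using fin unfolding N_def neighbours_def by simp
  have vN: "v \<notin> N" using irreflpD[OF irr] unfolding N_def neighbours_def by simp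
  have finite_B: "\<And>T. T \<in> B \<Longrightarrow> finite T" and v_notin_B: "\<And>T. T \<in> B \<Longrightarrow> v \<notin> T"
    using finN vN unfolding B_def cliques_below_def by (auto dest: finite_subset)
  have inj: "inj_on (insert v) B"
    by (rule inj_onI) (metis Diff_insert_absorb v_notin_B)
  have disj: "cliques_below (Suc n) (V - {v}) E \<inter> insert v ` B = {}"
    unfolding cliques_below_def by auto
  have "clique_sum (Suc n) V E
        = clique_sum (Suc n) (V - {v}) E + (\<Sum>S\<in>insert v ` B. (-1) ^ card S)"
    unfolding clique_sum_def cliques_below_delete[OF fin vV sym irr]
      N_def[symmetric] B_def[symmetric]
    using fin finN disj by (intro sum.union_disjoint) (auto simp: finite_cliques_below B_def)
  also have "(\<Sum>S\<in>insert v ` B. (-1::int) ^ card S) = (\<Sum>T\<in>B. (-1) ^ card (insert v T))"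
    using inj by (rule sum.reindex_cong) simp_all
  also have "\<dots> = - clique_sum n N E"
    unfolding clique_sum_def B_def[symmetric] using finite_B v_notin_B
    by (simp add: sum_negf[symmetric])
  finally show ?thesis unfolding N_def by simp
qed

lemma truncated_clique_sum:
  assumes fin: "finite W"
  shows "(\<Sum>I\<in>{I \<in> clique_complex W E. card I \<le> m}. (-1::int) ^ (card I - 1))
         = 1 - clique_sum (Suc m) W E"
proof -
  define C where "C = {I \<in> clique_complex W E. card I \<le> m}"
  have below: "cliques_below (Suc m) W E = insert {} C"
    unfolding cliques_below_def C_def clique_complex_def is_clique_def by auto
  have finC: "finite C" using finite_cliques_below[OF fin, of "Suc m" E] below by simp
  have pos: "card I > 0" if "I \<in> C" for I
    using that fin unfolding C_def clique_complex_def
    by (auto simp: card_gt_0_iff dest: finite_subset)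
  have "clique_sum (Suc m) W E = 1 + (\<Sum>I\<in>C. (-1) ^ card I)"
    unfolding clique_sum_def below using finC by (simp add: C_def clique_complex_def)
  also have "(\<Sum>I\<in>C. (-1::int) ^ card I) = - (\<Sum>I\<in>C. (-1) ^ (card I - 1))"
    unfolding sum_negf[symmetric]
    by (rule sum.cong) (simp_all add: pos power_eq_if)
  finally show ?thesis unfolding C_def by simp
qed

text \<open>The difference between c(G) and the truncated sum over cliques with fewer than n vertices.\<close>
definition defect :: "nat \<Rightarrow> 'a set \<Rightarrow> ('a \<Rightarrow> 'a \<Rightarrow> bool) \<Rightarrow> int" where
  "defect n W E = int (num_components W E) + clique_sum n W E - 1"

lemma defect_empty: "0 < n \<Longrightarrow> defect n {} E = 0"
proof -
  assume "0 < n"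
  then have "cliques_below n {} E = {{}}" unfolding cliques_below_def is_clique_def by auto
  moreover have "num_components {} E = 0" unfolding num_components_def by simp
  ultimately show ?thesis unfolding defect_def clique_sum_def by simp
qed

lemma defect_one: "finite W \<Longrightarrow> defect 1 W E = int (num_components W E)"
proof -
  assume "finite W"
  then have "cliques_below 1 W E = {{}}"
    unfolding cliques_below_def is_clique_def by (auto dest: finite_subset)
  then show ?thesis unfolding defect_def clique_sum_def by simp
qed

text \<open>For chordal graphs the defect satisfies the same deletion recurrence as the clique sum,
  because by chordal_neighbour_components c(G) = c(G - v) + 1 - c(N(v)).\<close>
lemma defect_delete:
  assumes fin: "finite V" and vV: "v \<in> V"
    and sym: "symp E" and irr: "irreflp E" and ch: "chordal V E"
  shows "defect (Suc n) V E = defect (Suc n) (V - {v}) E - defect n (neighbours V E v) E"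
  using components_delete_vertex[OF fin vV sym irr] chordal_neighbour_components[OF sym irr ch vV]
    clique_sum_delete[OF fin vV sym irr, of n]
  unfolding defect_def by linarith

lemma defect_sign:
  assumes "finite V" and sym: "symp E" and irr: "irreflp E" and "chordal V E" and "0 < n"
  shows "(-1) ^ n * defect n V E \<le> 0 \<and> (card V < n \<longrightarrow> defect n V E = 0)"
  using assms(1,4,5)
proof (induction "card V" arbitrary: V n rule: less_induct)
  case less
  show ?case
  proof (cases "V = {}")
    case True
    then show ?thesis using defect_empty[OF less.prems(3), of E] by simp
  next
    case False
    then obtain v where vV: "v \<in> V" by blast
    have card_V: "card V > 0" using False less.prems(1) by (simp add: card_gt_0_iff)
    show ?thesis
    proof (cases "n = 1")
      case True
      then show ?thesis using defect_one[OF less.prems(1)] card_V by simp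
    next
      case False
      then obtain m where n: "n = Suc m" and m: "0 < m"
        using less.prems(3) not0_implies_Suc by fastforce
      define V' where "V' = V - {v}"
      define N where "N = neighbours V E v"
      have NV': "N \<subseteq> V'" using neighbours_subset[OF irr] unfolding N_def V'_def .
      have card_V': "card V' = card V - 1" "finite V'"
        using vV less.prems(1) unfolding V'_def by auto
      have card_N: "card N \<le> card V'" "finite N"
        using card_mono[OF card_V'(2) NV'] finite_subset[OF NV' card_V'(2)] by auto
      have chordal_V': "chordal V' E" and chordal_N: "chordal N E"
        using chordal_subset[OF less.prems(2)] NV' unfolding V'_def by auto
      have IH_V': "(-1) ^ n * defect n V' E \<le> 0 \<and> (card V' < n \<longrightarrow> defect n V' E = 0)"
        using less.hyps[OF _ card_V'(2) chordal_V' less.prems(3)] card_V' card_V by simp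
      have IH_N: "(-1) ^ m * defect m N E \<le> 0 \<and> (card N < m \<longrightarrow> defect m N E = 0)"
        using less.hyps[OF _ card_N(2) chordal_N m] card_N card_V' card_V by simp
      have rec: "defect n V E = defect n V' E - defect m N E"
        unfolding n V'_def N_def by (rule defect_delete[OF less.prems(1) vV sym irr less.prems(2)])
      have "(-1) ^ n * defect n V E = (-1) ^ n * defect n V' E + (-1) ^ m * defect m N E"
        unfolding rec by (simp add: n algebra_simps)
      then have "(-1) ^ n * defect n V E \<le> 0" using IH_V' IH_N by linarith
      moreover have "defect n V E = 0" if "card V < n"
      proof -
        have "card V' < n" "card N < m" using that card_V card_V'(1) card_N(1) n by linarith+
        then show ?thesis using rec IH_V' IH_N by simp
      qed
      ultimately show ?thesis by blast
    qed
  qed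
qed

text \<open>The theorem is the case n = 2r + 1 of defect_sign.\<close>
theorem proposition2:
  fixes V :: "'a set" and E :: "'a \<Rightarrow> 'a \<Rightarrow> bool" and r :: nat
  assumes "simple_graph V E" and "chordal V E" and "r \<ge> 1"
  shows "(\<Sum>I\<in>{I \<in> clique_complex V E. card I \<le> 2 * r}. (-1::int) ^ (card I - 1))
           \<le> int (num_components V E)
         \<and> (card V \<le> 2 * r \<longrightarrow>
         (\<Sum>I\<in>{I \<in> clique_complex V E. card I \<le> 2 * r}. (-1::int) ^ (card I - 1))
           = int (num_components V E))"
proof -
  have fin: "finite V" and sym: "symp E" and irr: "irreflp E"
    using assms(1) unfolding simple_graph_def symp_def irreflp_def by auto
  have sum_eq: "(\<Sum>I\<in>{I \<in> clique_complex V E. card I \<le> 2 * r}. (-1::int) ^ (card I - 1))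
      = int (num_components V E) - defect (Suc (2 * r)) V E"
    unfolding truncated_clique_sum[OF fin] defect_def by simp
  have "(-1) ^ Suc (2 * r) * defect (Suc (2 * r)) V E \<le> 0
      \<and> (card V < Suc (2 * r) \<longrightarrow> defect (Suc (2 * r)) V E = 0)"
    by (rule defect_sign[OF fin sym irr assms(2)]) simp
  then show ?thesis unfolding sum_eq by auto
qed

end
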